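(* Let $m,s,d,k$ be positive integers and $q$ a prime power such that $d\le m(q-km^{s-1}-2)$ and $k\le\lfloor q/m\rfloor^{s-1}$. Then the multiplicity code $\mathcal{C}(m,d,s,q)$ is a $k$-batch code $[q^s,n,k]_Q^B$, where $n=\binom{d+s}{s}/\binom{s+m-1}{s}$ and $Q=q^{\binom{s+m-1}{s}}$.
   Context: For $\boldsymbol{i}=(i_1,\dots,i_s)$ a vector of nonnegative integers, $wt(\boldsymbol{i})=\sum_j i_j$. For $P\in\mathbb{F}_q[x_1,\dots,x_s]$, the $\boldsymbol{i}$-th Hasse derivative $P^{(\boldsymbol{i})}(\boldsymbol{x})$ is the coefficient of $\boldsymbol{z}^{\boldsymbol{i}}$ in $P(\boldsymbol{x}+\boldsymbol{z})$. Let $\Sigma=\mathbb{F}_q^{\binom{s+m-1}{s}}$ and $P^{(<m)}(\boldsymbol{w})=(P^{(\boldsymbol{i})}(\boldsymbol{w}))_{wt(\boldsymbol{i})<m}\in\Sigma$. The multiplicity code $\mathcal{C}(m,d,s,q)$ is the $\mathbb{F}_q$-linear code of length $q^s$ over the alphabet $\Sigma$ (of size $Q$), coordinates indexed by $\mathbb{F}_q^s$, consisting of $(P^{(<m)}(\boldsymbol{w}))_{\boldsymbol{w}\in\mathbb{F}_q^s}$ for all $P$ of total degree at most $d$, taken in systematic form so that it encodes $n=\log_Q|\mathcal{C}|$ information symbols. An $[N,n,k]_Q^B$ code ($k$-batch code) is a code of length $N$ over an alphabet of size $Q$ encoding $n$ information symbols $x_1,\dots,x_n$ such that for every multiset $\{i_1,\dots,i_k\}$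 of indices there exist $k$ mutually disjoint sets $R_1,\dots,R_k$ of coordinates such that, for each $j$, $x_{i_j}$ is a function of the codeword symbols in $R_j$. *)

theory Defs
  imports Complex_Main "HOL-Library.FuncSet"
begin

text \<open>Polynomials in s variables x_0,...,x_{s-1} over a field are represented by their
coefficient functions: a polynomial is a map from exponent vectors (nat => nat, zero at
positions >= s) to coefficients.  Points of F_q^s are maps nat => 'a vanishing at
positions >= s.\<close>

definition expvecs :: "nat \<Rightarrow> (nat \<Rightarrow> nat) set" where
  "expvecs s = {e. \<forall>j\<ge>s. e j = 0}"

definition wt :: "nat \<Rightarrow> (nat \<Rightarrow> nat) \<Rightarrow> nat" where
  "wt s e = (\<Sum>j<s. e j)"

definition monoms :: "nat \<Rightarrow> nat \<Rightarrow> (nat \<Rightarrow> nat) set" where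
  "monoms s d = {e \<in> expvecs s. wt s e \<le> d}"

definition mindices :: "nat \<Rightarrow> nat \<Rightarrow> (nat \<Rightarrow> nat) set" where
  "mindices s m = {i \<in> expvecs s. wt s i < m}"

definition polys :: "nat \<Rightarrow> nat \<Rightarrow> ((nat \<Rightarrow> nat) \<Rightarrow> 'a::field) set" where
  "polys s d = {P. \<forall>e. P e \<noteq> 0 \<longrightarrow> e \<in> monoms s d}"

definition points :: "nat \<Rightarrow> (nat \<Rightarrow> 'a::field) set" where
  "points s = {w. \<forall>j\<ge>s. w j = 0}"

text \<open>The i-th Hasse derivative of P (of degree at most d) at w: the coefficient of z^i in
P(w+z).  By the binomial theorem, the coefficient of z_j^(i_j) in (w_j + z_j)^(e_j) is
(e_j choose i_j) w_j^(e_j - i_j) (which is 0 when i_j > e_j).\<close>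
definition hasse :: "nat \<Rightarrow> nat \<Rightarrow> ((nat \<Rightarrow> nat) \<Rightarrow> 'a::field) \<Rightarrow> (nat \<Rightarrow> nat) \<Rightarrow> (nat \<Rightarrow> 'a) \<Rightarrow> 'a" where
  "hasse s d P i w = (\<Sum>e\<in>monoms s d. P e * (\<Prod>j<s. of_nat (e j choose i j) * w j ^ (e j - i j)))"

text \<open>The alphabet Sigma = F_q^{binom(s+m-1,s)}: vectors indexed by mindices s m.\<close>
definition alphabet :: "nat \<Rightarrow> nat \<Rightarrow> ((nat \<Rightarrow> nat) \<Rightarrow> 'a::field) set" where
  "alphabet s m = {\<sigma>. \<forall>i. i \<notin> mindices s m \<longrightarrow> \<sigma> i = 0}"

definition mult_symbol :: "nat \<Rightarrow> nat \<Rightarrow> nat \<Rightarrow> ((nat \<Rightarrow> nat) \<Rightarrow> 'a::field) \<Rightarrow> (nat \<Rightarrow> 'a) \<Rightarrow> ((nat \<Rightarrow> nat) \<Rightarrow> 'a)" where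
  "mult_symbol s m d P w = (\<lambda>i. if i \<in> mindices s m then hasse s d P i w else 0)"

text \<open>The codeword of P: coordinates indexed by points s (value outside irrelevant, set to 0).\<close>
definition mult_codeword :: "nat \<Rightarrow> nat \<Rightarrow> nat \<Rightarrow> ((nat \<Rightarrow> nat) \<Rightarrow> 'a::field) \<Rightarrow> (nat \<Rightarrow> 'a) \<Rightarrow> ((nat \<Rightarrow> nat) \<Rightarrow> 'a)" where
  "mult_codeword s m d P = (\<lambda>w. if w \<in> points s then mult_symbol s m d P w else (\<lambda>_. 0))"

text \<open>The multiplicity code C(m,d,s,q), q = CARD('a).\<close>
definition mult_code :: "nat \<Rightarrow> nat \<Rightarrow> nat \<Rightarrow> ((nat \<Rightarrow> 'a::field) \<Rightarrow> ((nat \<Rightarrow> nat) \<Rightarrow> 'a)) set" where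
  "mult_code m d s = mult_codeword s m d ` polys s d"

text \<open>k-batch property of a code C (set of words indexed by the coordinate set I):
for every multiset (here: list of length k) of coordinates there are k pairwise disjoint
sets of coordinates R_j such that the symbol at the j-th requested coordinate is a function
of the codeword symbols in R_j.  (In systematic form the information symbols are
codeword coordinates.)\<close>
definition is_batch_code :: "('i \<Rightarrow> 'b) set \<Rightarrow> 'i set \<Rightarrow> nat \<Rightarrow> bool" where
  "is_batch_code C I k \<longleftrightarrow>
     (\<forall>xs. length xs = k \<and> set xs \<subseteq> I \<longrightarrow>
        (\<exists>R :: nat \<Rightarrow> 'i set. \<exists>g :: nat \<Rightarrow> ('i \<Rightarrow> 'b) \<Rightarrow> 'b.
           (\<forall>j<k. R j \<subseteq> I) \<and>
           (\<forall>j<k. \<forall>j'<k. j \<noteq> j' \<longrightarrow> R j \<inter> R j' = {}) \<and>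
           (\<forall>j<k. \<forall>c\<in>C. c (xs ! j) = g j (restrict c (R j)))))"

end

theory Submission
  imports Defs "HOL-Computational_Algebra.Polynomial"
begin

text \<open>
  The encoding is injective, hence the code has \<open>q^(d+s choose s)\<close> words: a nonzero polynomial of
  degree \<open>d < m q\<close> cannot vanish with multiplicity \<open>m\<close> on all of \<open>F_q^s\<close>. This is proved by induction
  on \<open>s\<close>: if \<open>t\<close> is the top degree in the last variable, its coefficient vanishes with multiplicity
  \<open>m - t div q\<close> on \<open>F_q^(s-1)\<close>, since otherwise some derivative in the first variables, viewed as a
  polynomial of degree at most \<open>t\<close> in the last one, would have \<open>q\<close> roots of multiplicity above \<open>t / q\<close>.

  For the batch property, request \<open>x_j\<close> gets a private block \<open>A_j\<close> of \<open>m^(s-1)\<close> field elements and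
  uses the lines \<open>x_j + t v_a\<close>, \<open>a \<in> A_j\<close>, in the directions \<open>v_a = (1, a, a^m, a^(m^2), ...)\<close>,
  with \<open>x_j\<close> and all points on lines of other requests removed. Two such lines meet at most once,
  so each line keeps at least \<open>q - 1 - (k-1) m^(s-1) > d / m\<close> points. On a line, \<open>T \<mapsto> P(x_j + T v_a)\<close>
  has degree at most \<open>d\<close> and its order-\<open>m\<close> data at these points determine it, hence its
  coefficients \<open>\<Sum>_{|i|=r} v_a^i P^(i)(x_j)\<close>. As a polynomial in \<open>a\<close>, the coefficient for \<open>r < m\<close> has
  degree below \<open>m^(s-1)\<close> and distinct exponents \<open>i_1 + i_2 m + ... + i_(s-1) m^(s-2)\<close>, so its values
  at the \<open>m^(s-1)\<close> points of \<open>A_j\<close> determine every \<open>P^(i)(x_j)\<close> with \<open>|i| < m\<close>.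
\<close>

lemma card_funs_vanishing_outside:
  assumes "finite J"
  shows "card {f :: 'i \<Rightarrow> 'b::{finite,zero}. \<forall>x. x \<notin> J \<longrightarrow> f x = 0} = card (UNIV :: 'b set) ^ card J"
proof -
  have "bij_betw (\<lambda>f. restrict f J) {f :: 'i \<Rightarrow> 'b. \<forall>x. x \<notin> J \<longrightarrow> f x = 0} (J \<rightarrow>\<^sub>E UNIV)"
    by (rule bij_betw_byWitness[where f'="\<lambda>g x. if x \<in> J then g x else 0"])
       (auto simp: PiE_def extensional_def fun_eq_iff)
  then show ?thesis
    using assms by (simp add: bij_betw_same_card card_PiE)
qed

lemma wt_Suc: "wt (Suc s) e = wt s e + e s"
  by (simp add: wt_def)

lemma wt_fun_upd_same: "wt s (i(s := x)) = wt s i"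
  by (simp add: wt_def)

lemma component_le_wt: "j < s \<Longrightarrow> i j \<le> wt s i"
  unfolding wt_def by (intro member_le_sum) auto

lemma binomial_add_commute: "(a + b) choose a = (a + b) choose b"
  by (metis binomial_symmetric le_add1 add_diff_cancel_left')

lemma finite_card_monoms: "finite (monoms s r) \<and> card (monoms s r) = (r + s) choose s"
  unfolding monoms_def
proof (induction s arbitrary: r)
  case 0
  have "{i \<in> expvecs 0. wt 0 i \<le> r} = {\<lambda>_. 0}"
    by (auto simp: expvecs_def wt_def)
  then show ?case by simp
next
  case (Suc s)
  let ?A = "{i \<in> expvecs (Suc s). wt (Suc s) i \<le> r}"
  let ?S = "SIGMA x:{..r}. {i \<in> expvecs s. wt s i \<le> r - x}"
  have bij: "bij_betw (\<lambda>i. (i s, i(s := 0))) ?A ?S"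
    by (rule bij_betw_byWitness[where f'="\<lambda>(x, i). i(s := x)"])
       (auto simp: expvecs_def wt_Suc wt_fun_upd_same)
  have "card ?A = card ?S" using bij by (rule bij_betw_same_card)
  also have "\<dots> = (\<Sum>x\<le>r. (r - x + s) choose s)"
    using Suc by (subst card_SigmaI) auto
  also have "\<dots> = (\<Sum>x\<le>r. (s + (r - x)) choose (r - x))"
    by (intro sum.cong refl) (metis binomial_add_commute add.commute)
  also have "\<dots> = (\<Sum>y\<le>r. (s + y) choose y)"
    by (rule sum.reindex_bij_witness[where i="\<lambda>y. r - y" and j="\<lambda>x. r - x"]) auto
  also have "\<dots> = (r + Suc s) choose Suc s"
    using sum_choose_lower[of s r] binomial_add_commute[of r "Suc s"] by (simp add: add.commute)
  finally show ?case
    using bij Suc bij_betw_finite by blast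
qed

lemma finite_monoms: "finite (monoms s d)"
  using finite_card_monoms by blast

lemma card_monoms: "card (monoms s d) = (d + s) choose s"
  using finite_card_monoms by blast

lemma mindices_eq_monoms: "0 < m \<Longrightarrow> mindices s m = monoms s (m - 1)"
  by (auto simp: mindices_def monoms_def)

lemma card_mindices: "0 < m \<Longrightarrow> card (mindices s m) = (s + m - 1) choose s"
  by (simp add: mindices_eq_monoms card_monoms add.commute)

lemma polys_diff: "P \<in> polys s d \<Longrightarrow> P' \<in> polys s d \<Longrightarrow> (\<lambda>e. P e - P' e) \<in> polys s d"
  by (force simp: polys_def)

lemma degree_linear_poly_power_le: "degree ([:c, v:] ^ n) \<le> n"
proof -
  have "degree ([:c, v:] ^ n) \<le> degree [:c, v:] * n" by (rule degree_power_le)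
  also have "\<dots> \<le> 1 * n" by (intro mult_le_mono1) (simp add: degree_pCons_le)
  finally show ?thesis by simp
qed

lemma coeff_linear_poly_power':
  fixes c :: "'b::comm_ring_1"
  shows "coeff ([:c, v:] ^ n) r = of_nat (n choose r) * v ^ r * c ^ (n - r)"
proof (cases "r \<le> n")
  case False
  then show ?thesis
    using degree_linear_poly_power_le[of c v n] by (simp add: coeff_eq_0 binomial_eq_0)
qed (rule coeff_linear_poly_power)

lemma linear_poly_power_eq_sum_monom:
  fixes c :: "'b::comm_ring_1"
  shows "[:c, v:] ^ n = (\<Sum>x\<le>n. monom (of_nat (n choose x) * v ^ x * c ^ (n - x)) x)"
  by (rule poly_eqI)
     (auto simp: coeff_sum coeff_monom coeff_linear_poly_power' binomial_eq_0 not_le)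

lemma pcompose_power: "pcompose (p ^ n) q = pcompose p q ^ n"
  by (induction n) (simp_all add: pcompose_1 pcompose_mult)

lemma pcompose_monom: "pcompose (monom c n) q = smult c (q ^ n)"
  by (induction n) (simp_all add: monom_Suc pcompose_pCons monom_0)

lemma coeff_pcompose_monom_linear:
  fixes b :: "'b::comm_ring_1"
  shows "coeff (pcompose (monom c n) [:b, 1:]) r = c * of_nat (n choose r) * b ^ (n - r)"
  by (simp add: pcompose_monom coeff_linear_poly_power')

lemma linear_power_dvd_if_taylor_coeffs_zero:
  fixes p :: "'b::comm_ring_1 poly"
  assumes "\<forall>r<\<mu>. coeff (pcompose p [:b, 1:]) r = 0"
  shows "[:-b, 1:] ^ \<mu> dvd p"
proof -
  have "monom 1 \<mu> dvd pcompose p [:b, 1:]"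
    using assms by (simp add: monom_1_dvd_iff')
  then obtain h where h: "pcompose p [:b, 1:] = monom 1 \<mu> * h" ..
  have "p = pcompose (pcompose p [:b, 1:]) [:-b, 1:]"
    by (simp flip: pcompose_assoc add: pcompose_pCons)
  also have "\<dots> = [:-b, 1:] ^ \<mu> * pcompose h [:-b, 1:]"
    by (simp add: h pcompose_mult pcompose_monom)
  finally show ?thesis by (metis dvd_triv_left)
qed

lemma multiplicities_le_degree:
  fixes p :: "'b::idom poly"
  assumes "p \<noteq> 0" "\<forall>b\<in>B. \<forall>r<\<mu>. coeff (pcompose p [:b, 1:]) r = 0"
  shows "\<mu> * card B \<le> degree p"
proof (cases "\<mu> = 0")
  case False
  have order: "\<mu> \<le> order b p" if "b \<in> B" for b
    using linear_power_dvd_if_taylor_coeffs_zero[of \<mu> p b] assms that by (auto simp: order_divides)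
  have roots: "B \<subseteq> {x. poly p x = 0}"
  proof
    fix b assume "b \<in> B"
    then have "order b p \<noteq> 0" using order False by (metis le_zero_eq)
    then show "b \<in> {x. poly p x = 0}" by (simp add: order_root)
  qed
  have "\<mu> * card B = (\<Sum>b\<in>B. \<mu>)" by simp
  also have "\<dots> \<le> (\<Sum>b\<in>B. order b p)" using order by (rule sum_mono)
  also have "\<dots> \<le> (\<Sum>x | poly p x = 0. order x p)"
    by (rule sum_mono2[OF poly_roots_finite[OF assms(1)] roots]) simp
  also have "\<dots> \<le> degree p" by (rule sum_order_le_degree[OF assms(1)])
  finally show ?thesis .
qed simp

definition hasse_monom :: "nat \<Rightarrow> (nat \<Rightarrow> nat) \<Rightarrow> (nat \<Rightarrow> nat) \<Rightarrow> (nat \<Rightarrow> 'a::field) \<Rightarrow> 'a" where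
  "hasse_monom s e i w = (\<Prod>j<s. of_nat (e j choose i j) * w j ^ (e j - i j))"

lemma hasse_eq_sum_hasse_monom: "hasse s d P i w = (\<Sum>e\<in>monoms s d. P e * hasse_monom s e i w)"
  by (simp add: hasse_def hasse_monom_def)

lemma hasse_monom_Suc:
  "hasse_monom (Suc s) e (i(s := r)) (w(s := b))
     = hasse_monom s e i w * (of_nat (e s choose r) * b ^ (e s - r))"
  by (simp add: hasse_monom_def)

lemma hasse_diff: "hasse s d (\<lambda>e. P e - P' e) i w = hasse s d P i w - hasse s d P' i w"
  by (simp add: hasse_def sum_subtractf algebra_simps)

definition coeff_last :: "nat \<Rightarrow> nat \<Rightarrow> ((nat \<Rightarrow> nat) \<Rightarrow> 'a::zero) \<Rightarrow> (nat \<Rightarrow> nat) \<Rightarrow> 'a" where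
  "coeff_last s t P = (\<lambda>e. if e \<in> expvecs s then P (e(s := t)) else 0)"

lemma coeff_last_in_polys: "P \<in> polys (Suc s) d \<Longrightarrow> coeff_last s t P \<in> polys s (d - t)"
  by (auto simp: polys_def coeff_last_def monoms_def expvecs_def wt_Suc wt_fun_upd_same)

text \<open>The univariate polynomial \<open>X \<mapsto> P^(i)(w, X)\<close> in the last variable, for \<open>i\<close> and \<open>w\<close> in the
  first \<open>s\<close> variables.\<close>

definition hasse_last :: "nat \<Rightarrow> nat \<Rightarrow> ((nat \<Rightarrow> nat) \<Rightarrow> 'a::field) \<Rightarrow> (nat \<Rightarrow> nat) \<Rightarrow> (nat \<Rightarrow> 'a) \<Rightarrow> 'a poly" where
  "hasse_last s d P i w = (\<Sum>e\<in>monoms (Suc s) d. monom (P e * hasse_monom s e i w) (e s))"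

lemma coeff_hasse_last:
  assumes "t \<le> d"
  shows "coeff (hasse_last s d P i w) t = hasse s (d - t) (coeff_last s t P) i w"
proof -
  have "coeff (hasse_last s d P i w) t
      = (\<Sum>e\<in>{e \<in> monoms (Suc s) d. e s = t}. P e * hasse_monom s e i w)"
    by (simp add: hasse_last_def coeff_sum coeff_monom sum.inter_filter[OF finite_monoms])
  also have "\<dots> = (\<Sum>e\<in>monoms s (d - t). coeff_last s t P e * hasse_monom s e i w)"
  proof (rule sum.reindex_bij_witness[where i="\<lambda>e. e(s := t)" and j="\<lambda>e. e(s := 0)"])
    fix e assume "e \<in> {e \<in> monoms (Suc s) d. e s = t}"
    then show "(e(s := 0))(s := t) = e" "e(s := 0) \<in> monoms s (d - t)"
      "coeff_last s t P (e(s := 0)) * hasse_monom s (e(s := 0)) i w = P e * hasse_monom s e i w"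
      by (auto simp: monoms_def expvecs_def wt_Suc wt_fun_upd_same coeff_last_def hasse_monom_def)
  next
    fix e assume "e \<in> monoms s (d - t)"
    then show "(e(s := t))(s := 0) = e" "e(s := t) \<in> {e \<in> monoms (Suc s) d. e s = t}"
      using assms by (auto simp: monoms_def expvecs_def wt_Suc wt_fun_upd_same fun_eq_iff)
  qed
  finally show ?thesis by (simp add: hasse_eq_sum_hasse_monom)
qed

lemma taylor_coeff_hasse_last:
  "coeff (pcompose (hasse_last s d P i w) [:b, 1:]) r = hasse (Suc s) d P (i(s := r)) (w(s := b))"
  by (simp add: hasse_last_def hasse_eq_sum_hasse_monom pcompose_sum coeff_sum
      coeff_pcompose_monom_linear hasse_monom_Suc mult_ac)

lemma degree_hasse_last:
  assumes "\<forall>e. P e \<noteq> 0 \<longrightarrow> e s \<le> t"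
  shows "degree (hasse_last s d P i w) \<le> t"
  unfolding hasse_last_def
proof (rule degree_sum_le[OF finite_monoms])
  fix e
  show "degree (monom (P e * hasse_monom s e i w) (e s)) \<le> t"
    using assms by (cases "P e = 0") (auto intro: order.trans[OF degree_monom_le])
qed

lemma coeff_last_vanishes:
  fixes P :: "(nat \<Rightarrow> nat) \<Rightarrow> 'a::{finite,field}"
  assumes van: "\<forall>w\<in>points (Suc s). \<forall>i\<in>mindices (Suc s) m. hasse (Suc s) d P i w = 0"
    and deg: "\<forall>e. P e \<noteq> 0 \<longrightarrow> e s \<le> t" and "t \<le> d"
  shows "\<forall>w\<in>points s. \<forall>i\<in>mindices s (m - t div card (UNIV :: 'a set)).
           hasse s (d - t) (coeff_last s t P) i w = 0"
proof (intro ballI, rule ccontr)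
  let ?q = "card (UNIV :: 'a set)"
  fix w i
  assume w: "w \<in> points s" and i: "i \<in> mindices s (m - t div ?q)"
    and nz: "hasse s (d - t) (coeff_last s t P) i w \<noteq> 0"
  let ?g = "hasse_last s d P i w"
  have g_nz: "?g \<noteq> 0"
    using nz coeff_hasse_last[OF \<open>t \<le> d\<close>, of s P i w] by auto
  have taylor: "\<forall>b\<in>UNIV. \<forall>r<m - wt s i. coeff (pcompose ?g [:b, 1:]) r = 0"
  proof (intro ballI allI impI)
    fix b r assume "r < m - wt s i"
    then have "i(s := r) \<in> mindices (Suc s) m"
      using i by (auto simp: mindices_def expvecs_def wt_Suc wt_fun_upd_same)
    moreover have "w(s := b) \<in> points (Suc s)"
      using w by (auto simp: points_def)
    ultimately show "coeff (pcompose ?g [:b, 1:]) r = 0"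
      using van by (simp add: taylor_coeff_hasse_last)
  qed
  have "(t div ?q + 1) * ?q \<le> (m - wt s i) * ?q"
    using i by (intro mult_le_mono1) (auto simp: mindices_def)
  also have "\<dots> \<le> degree ?g"
    by (rule multiplicities_le_degree[OF g_nz taylor])
  also have "degree ?g \<le> t"
    using deg by (rule degree_hasse_last)
  finally have "(t div ?q + 1) * ?q \<le> t" .
  moreover have "t < (t div ?q + 1) * ?q"
    using dividend_less_times_div[of ?q t] by (simp add: card_gt_0_iff algebra_simps)
  ultimately show False by linarith
qed

theorem polys_eq_0_if_vanishing_multiplicity:
  fixes P :: "(nat \<Rightarrow> nat) \<Rightarrow> 'a::{finite,field}"
  assumes "P \<in> polys s d" "d < m * card (UNIV :: 'a set)"
    "\<forall>w\<in>points s. \<forall>i\<in>mindices s m. hasse s d P i w = 0"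
  shows "P = (\<lambda>_. 0)"
  using assms
proof (induction s arbitrary: d m P)
  case 0
  have monoms: "monoms 0 d = {\<lambda>_. 0}"
    by (auto simp: monoms_def expvecs_def wt_def)
  have "0 < m"
    using "0.prems"(2) by (cases m) auto
  then have "(\<lambda>_. 0) \<in> mindices 0 m" "(\<lambda>_. 0) \<in> points 0"
    by (auto simp: mindices_def expvecs_def wt_def points_def)
  then have "P (\<lambda>_. 0) = 0"
    using "0.prems"(3) by (force simp: hasse_def monoms)
  then show ?case
    using "0.prems"(1) by (auto simp: polys_def monoms)
next
  case (Suc s)
  let ?q = "card (UNIV :: 'a set)"
  show ?case
  proof (rule ccontr)
    assume "P \<noteq> (\<lambda>_. 0)"
    have support: "{e. P e \<noteq> 0} \<subseteq> monoms (Suc s) d"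
      using Suc.prems(1) by (auto simp: polys_def)
    define t where "t = Max ((\<lambda>e. e s) ` {e. P e \<noteq> 0})"
    have finite: "finite ((\<lambda>e. e s) ` {e. P e \<noteq> 0})"
      using finite_subset[OF support finite_monoms] by simp
    then have t_max: "\<forall>e. P e \<noteq> 0 \<longrightarrow> e s \<le> t"
      unfolding t_def by auto
    have "t \<in> (\<lambda>e. e s) ` {e. P e \<noteq> 0}"
      unfolding t_def using finite \<open>P \<noteq> (\<lambda>_. 0)\<close> by (intro Max_in) auto
    then obtain e0 where e0: "P e0 \<noteq> 0" "e0 s = t" by blast
    have "t \<le> d"
      using e0 support by (auto simp: monoms_def wt_Suc)
    have "coeff_last s t P (e0(s := 0)) \<noteq> 0"
      using e0 support by (auto simp: coeff_last_def monoms_def expvecs_def fun_upd_idem)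
    moreover have "coeff_last s t P = (\<lambda>_. 0)"
    proof (rule Suc.IH)
      show "coeff_last s t P \<in> polys s (d - t)"
        using Suc.prems(1) by (rule coeff_last_in_polys)
      have "(m - t div ?q) * ?q = m * ?q - t div ?q * ?q"
        by (simp add: diff_mult_distrib)
      then show "d - t < (m - t div ?q) * ?q"
        using Suc.prems(2) \<open>t \<le> d\<close> div_times_less_eq_dividend[of t ?q] by linarith
      show "\<forall>w\<in>points s. \<forall>i\<in>mindices s (m - t div ?q). hasse s (d - t) (coeff_last s t P) i w = 0"
        using Suc.prems(3) t_max \<open>t \<le> d\<close> by (rule coeff_last_vanishes)
    qed
    ultimately show False by simp
  qed
qed

definition exps_below :: "nat \<Rightarrow> (nat \<Rightarrow> nat) \<Rightarrow> (nat \<Rightarrow> nat) set" where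
  "exps_below s e = {i \<in> expvecs s. \<forall>j<s. i j \<le> e j}"

lemma finite_exps_below: "finite (exps_below s e)"
proof (rule finite_subset[OF _ finite_monoms])
  show "exps_below s e \<subseteq> monoms s (wt s e)"
    by (auto simp: exps_below_def monoms_def wt_def intro: sum_mono)
qed

lemma prod_sum_exps_below:
  fixes f :: "nat \<Rightarrow> nat \<Rightarrow> 'b::comm_semiring_1"
  shows "(\<Prod>j<s. \<Sum>x\<le>e j. f j x) = (\<Sum>i\<in>exps_below s e. \<Prod>j<s. f j (i j))"
proof -
  have "bij_betw (\<lambda>i. restrict i {..<s}) (exps_below s e) (PiE {..<s} (\<lambda>j. {..e j}))"
    by (rule bij_betw_byWitness[where f'="\<lambda>g j. if j < s then g j else 0"])
       (auto simp: exps_below_def expvecs_def PiE_def extensional_def fun_eq_iff)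
  then have "(\<Sum>g\<in>PiE {..<s} (\<lambda>j. {..e j}). \<Prod>j<s. f j (g j))
      = (\<Sum>i\<in>exps_below s e. \<Prod>j<s. f j (restrict i {..<s} j))"
    by (rule sum.reindex_bij_betw[symmetric])
  then show ?thesis
    by (simp add: prod_sum_PiE)
qed

lemma prod_monom: "(\<Prod>j<(s::nat). monom (a j) (n j)) = monom (\<Prod>j<s. a j) (\<Sum>j<s. n j)"
  by (induction s) (simp_all add: mult_monom)

definition homog_exps :: "nat \<Rightarrow> nat \<Rightarrow> (nat \<Rightarrow> nat) set" where
  "homog_exps s r = {i \<in> expvecs s. wt s i = r}"

lemma finite_homog_exps: "finite (homog_exps s r)"
  by (rule finite_subset[OF _ finite_monoms[of s r]]) (auto simp: homog_exps_def monoms_def)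

definition vec_pow :: "nat \<Rightarrow> (nat \<Rightarrow> 'a::field) \<Rightarrow> (nat \<Rightarrow> nat) \<Rightarrow> 'a" where
  "vec_pow s v i = (\<Prod>j<s. v j ^ i j)"

lemma coeff_prod_linear_powers:
  fixes c v :: "nat \<Rightarrow> 'a::field"
  shows "coeff (\<Prod>j<s. [:c j, v j:] ^ e j) r = (\<Sum>i\<in>homog_exps s r. vec_pow s v i * hasse_monom s e i c)"
proof -
  define T where "T i = (\<Prod>j<s. of_nat (e j choose i j) * v j ^ i j * c j ^ (e j - i j))" for i
  have "(\<Prod>j<s. [:c j, v j:] ^ e j) = (\<Sum>i\<in>exps_below s e. monom (T i) (wt s i))"
    by (simp add: linear_poly_power_eq_sum_monom prod_sum_exps_below prod_monom T_def wt_def)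
  then have "coeff (\<Prod>j<s. [:c j, v j:] ^ e j) r
      = (\<Sum>i\<in>exps_below s e. if i \<in> homog_exps s r then T i else 0)"
    by (auto simp: coeff_sum coeff_monom homog_exps_def exps_below_def intro!: sum.cong)
  also have "\<dots> = (\<Sum>i\<in>exps_below s e \<inter> homog_exps s r. T i)"
    by (simp add: sum.inter_restrict[OF finite_exps_below])
  also have "\<dots> = (\<Sum>i\<in>homog_exps s r. T i)"
  proof (rule sum.mono_neutral_left[OF finite_homog_exps])
    show "\<forall>i\<in>homog_exps s r - exps_below s e \<inter> homog_exps s r. T i = 0"
    proof
      fix i assume "i \<in> homog_exps s r - exps_below s e \<inter> homog_exps s r"
      then obtain j where "j < s" "e j < i j"
        by (auto simp: homog_exps_def exps_below_def not_le)
      then show "T i = 0"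
        unfolding T_def by (intro prod_zero bexI[of _ j]) (auto simp: binomial_eq_0)
    qed
  qed auto
  also have "\<dots> = (\<Sum>i\<in>homog_exps s r. vec_pow s v i * hasse_monom s e i c)"
    by (simp add: T_def vec_pow_def hasse_monom_def prod.distrib mult_ac)
  finally show ?thesis .
qed

definition line_pt :: "(nat \<Rightarrow> 'a::field) \<Rightarrow> (nat \<Rightarrow> 'a) \<Rightarrow> 'a \<Rightarrow> nat \<Rightarrow> 'a" where
  "line_pt w v t = (\<lambda>l. w l + t * v l)"

definition line_poly :: "nat \<Rightarrow> nat \<Rightarrow> ((nat \<Rightarrow> nat) \<Rightarrow> 'a::field) \<Rightarrow> (nat \<Rightarrow> 'a) \<Rightarrow> (nat \<Rightarrow> 'a) \<Rightarrow> 'a poly" where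
  "line_poly s d P w v = (\<Sum>e\<in>monoms s d. smult (P e) (\<Prod>j<s. [:w j, v j:] ^ e j))"

lemma coeff_line_poly:
  "coeff (line_poly s d P w v) r = (\<Sum>i\<in>homog_exps s r. vec_pow s v i * hasse s d P i w)"
  by (simp add: line_poly_def coeff_sum coeff_prod_linear_powers hasse_eq_sum_hasse_monom
      sum_distrib_left sum_distrib_right mult_ac sum.swap[where A="monoms s d"])

lemma degree_line_poly: "degree (line_poly s d P w v) \<le> d"
  unfolding line_poly_def
proof (intro degree_sum_le[OF finite_monoms] order.trans[OF degree_smult_le])
  fix e assume "e \<in> monoms s d"
  have "degree (\<Prod>j<s. [:w j, v j:] ^ e j) \<le> (\<Sum>j<s. degree ([:w j, v j:] ^ e j))"
    using degree_prod_sum_le[of "{..<s}"] by (simp add: o_def)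
  also have "\<dots> \<le> wt s e"
    unfolding wt_def by (intro sum_mono degree_linear_poly_power_le)
  also have "\<dots> \<le> d"
    using \<open>e \<in> monoms s d\<close> by (simp add: monoms_def)
  finally show "degree (\<Prod>j<s. [:w j, v j:] ^ e j) \<le> d" .
qed

lemma pcompose_line_poly:
  "pcompose (line_poly s d P w v) [:t, 1:] = line_poly s d P (line_pt w v t) v"
  by (simp add: line_poly_def line_pt_def pcompose_sum pcompose_smult pcompose_prod pcompose_power
      pcompose_pCons algebra_simps)

lemma line_coeffs_vanish:
  assumes "d < m * card T" "\<forall>t\<in>T. \<forall>i\<in>mindices s m. hasse s d P i (line_pt w v t) = 0"
  shows "(\<Sum>i\<in>homog_exps s r. vec_pow s v i * hasse s d P i w) = 0"
proof -
  have "line_poly s d P w v = 0"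
  proof (rule ccontr)
    assume nz: "line_poly s d P w v \<noteq> 0"
    have "\<forall>t\<in>T. \<forall>r<m. coeff (pcompose (line_poly s d P w v) [:t, 1:]) r = 0"
      using assms(2) by (auto simp: pcompose_line_poly coeff_line_poly homog_exps_def mindices_def
          intro!: sum.neutral)
    then have "m * card T \<le> degree (line_poly s d P w v)"
      by (rule multiplicities_le_degree[OF nz])
    then show False
      using degree_line_poly[of s d P w v] assms(1) by linarith
  qed
  then show ?thesis by (metis coeff_0 coeff_line_poly)
qed

text \<open>Kronecker substitution: along \<open>v = (1, a, a^m, a^(m^2), ...)\<close> the monomial \<open>v^i\<close> becomes
  \<open>a^(kron_exp s m i)\<close>.\<close>

definition kron_dir :: "nat \<Rightarrow> nat \<Rightarrow> 'a::field \<Rightarrow> nat \<Rightarrow> 'a" where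
  "kron_dir s m a = (\<lambda>j. if j = 0 then 1 else if j < s then a ^ (m ^ (j - 1)) else 0)"

definition kron_exp :: "nat \<Rightarrow> nat \<Rightarrow> (nat \<Rightarrow> nat) \<Rightarrow> nat" where
  "kron_exp s m i = (\<Sum>j<s - 1. i (Suc j) * m ^ j)"

lemma vec_pow_kron_dir:
  assumes "0 < s"
  shows "vec_pow s (kron_dir s m a) i = a ^ kron_exp s m i"
proof -
  obtain s' where s: "s = Suc s'" using assms by (cases s) auto
  have "vec_pow s (kron_dir s m a) i = (\<Prod>j<s'. a ^ (i (Suc j) * m ^ j))"
    unfolding vec_pow_def s prod.lessThan_Suc_shift
    by (simp add: kron_dir_def power_mult[symmetric] mult.commute)
  also have "\<dots> = a ^ kron_exp s m i" by (simp add: kron_exp_def s power_sum)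
  finally show ?thesis .
qed

lemma digits_sum_less:
  assumes "\<forall>j<n. x j < (m::nat)"
  shows "(\<Sum>j<n. x j * m ^ j) < m ^ n"
  using assms
proof (induction n)
  case (Suc n)
  have "(\<Sum>j<Suc n. x j * m ^ j) < m ^ n + x n * m ^ n" using Suc by simp
  also have "\<dots> = (x n + 1) * m ^ n" by simp
  also have "\<dots> \<le> m * m ^ n" using Suc.prems[rule_format, of n] by (intro mult_le_mono1) simp
  finally show ?case by simp
qed simp

lemma digits_sum_inj:
  assumes "\<forall>j<n. x j < (m::nat)" "\<forall>j<n. y j < m" "(\<Sum>j<n. x j * m ^ j) = (\<Sum>j<n. y j * m ^ j)"
  shows "\<forall>j<n. x j = y j"
  using assms
proof (induction n)
  case (Suc n)
  let ?X = "\<Sum>j<n. x j * m ^ j" and ?Y = "\<Sum>j<n. y j * m ^ j"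
  have less: "?X < m ^ n" "?Y < m ^ n"
    using Suc.prems(1,2) by (simp_all add: digits_sum_less)
  have eq: "?X + x n * m ^ n = ?Y + y n * m ^ n"
    using Suc.prems(3) by simp
  have top_digit: "(a + b * m ^ n) div m ^ n = b" if "a < m ^ n" for a b
  proof -
    have "m ^ n \<noteq> 0" using that by (metis less_nat_zero_code)
    then show ?thesis using that by simp
  qed
  have "x n = (?X + x n * m ^ n) div m ^ n" "y n = (?Y + y n * m ^ n) div m ^ n"
    using less by (simp_all add: top_digit)
  then have "x n = y n" using eq by simp
  with eq have "?X = ?Y" by simp
  with Suc \<open>x n = y n\<close> show ?case by (simp add: less_Suc_eq)
qed simp

lemma wt_Suc_shift: "wt (Suc s) i = i 0 + (\<Sum>j<s. i (Suc j))"
  unfolding wt_def sum.lessThan_Suc_shift by simp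

lemma kron_exp_inj_on:
  assumes "0 < s" "r < m"
  shows "inj_on (kron_exp s m) (homog_exps s r)"
proof
  fix i i' assume i: "i \<in> homog_exps s r" and i': "i' \<in> homog_exps s r"
    and eq: "kron_exp s m i = kron_exp s m i'"
  obtain s' where s: "s = Suc s'" using assms(1) by (cases s) auto
  have small: "z j < m" if "z \<in> homog_exps s r" "j < s" for z j
    using component_le_wt[OF that(2), of z] that(1) assms(2) by (simp add: homog_exps_def)
  have tail: "\<forall>j<s'. i (Suc j) = i' (Suc j)"
    using eq small[OF i] small[OF i'] by (intro digits_sum_inj[where m=m]) (auto simp: kron_exp_def s)
  then have "i 0 = i' 0"
    using i i' by (simp add: homog_exps_def s wt_Suc_shift)
  show "i = i'"
  proof
    fix j
    show "i j = i' j"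
      using tail \<open>i 0 = i' 0\<close> i i'
      by (cases j; cases "j < s") (auto simp: homog_exps_def expvecs_def s)
  qed
qed

lemma eq_0_if_kron_sums_eq_0:
  fixes h :: "(nat \<Rightarrow> nat) \<Rightarrow> 'a::field"
  assumes "0 < s" "card A = m ^ (s - 1)"
    "\<forall>a\<in>A. \<forall>r. (\<Sum>i\<in>homog_exps s r. vec_pow s (kron_dir s m a) i * h i) = 0"
    "i0 \<in> mindices s m"
  shows "h i0 = 0"
proof -
  define r where "r = wt s i0"
  have "r < m" "i0 \<in> homog_exps s r"
    using assms(4) by (simp_all add: r_def mindices_def homog_exps_def)
  define p where "p = (\<Sum>i\<in>homog_exps s r. monom (h i) (kron_exp s m i))"
  have "degree p < m ^ (s - 1)"
  proof -
    have "kron_exp s m i < m ^ (s - 1)" if i: "i \<in> homog_exps s r" for i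
    proof -
      have "i j < m" if "j < s" for j
        using component_le_wt[OF that, of i] i \<open>r < m\<close> by (simp add: homog_exps_def)
      then show ?thesis
        unfolding kron_exp_def by (intro digits_sum_less) simp
    qed
    then have "degree p \<le> m ^ (s - 1) - 1"
      unfolding p_def by (intro degree_sum_le[OF finite_homog_exps] order.trans[OF degree_monom_le])
        fastforce
    moreover have "0 < m ^ (s - 1)" using \<open>r < m\<close> by simp
    ultimately show ?thesis by linarith
  qed
  have roots: "A \<subseteq> {x. poly p x = 0}"
    using assms(1,3) by (auto simp: p_def poly_sum poly_monom vec_pow_kron_dir mult_ac)
  have "p = 0"
  proof (rule ccontr)
    assume "p \<noteq> 0"
    then have "card A \<le> card {x. poly p x = 0}"
      using roots by (intro card_mono poly_roots_finite)
    also have "\<dots> \<le> degree p"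
      using \<open>p \<noteq> 0\<close> by (rule card_poly_roots_bound)
    finally show False
      using \<open>degree p < m ^ (s - 1)\<close> assms(2) by simp
  qed
  have "coeff p (kron_exp s m i0) = (\<Sum>i\<in>homog_exps s r. if i = i0 then h i else 0)"
    unfolding p_def coeff_sum coeff_monom
    using inj_on_eq_iff[OF kron_exp_inj_on[OF assms(1) \<open>r < m\<close>] _ \<open>i0 \<in> homog_exps s r\<close>]
    by (intro sum.cong) auto
  also have "\<dots> = h i0"
    using \<open>i0 \<in> homog_exps s r\<close> finite_homog_exps by simp
  finally show ?thesis using \<open>p = 0\<close> by simp
qed

text \<open>By linearity of the encoding, \<open>recovers s m d R x\<close> says that the codeword symbol at \<open>x\<close> is a
  function of the symbols at the positions in \<open>R\<close>.\<close>

definition recovers :: "nat \<Rightarrow> nat \<Rightarrow> nat \<Rightarrow> (nat \<Rightarrow> 'a::field) set \<Rightarrow> (nat \<Rightarrow> 'a) \<Rightarrow> bool" where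
  "recovers s m d R x \<longleftrightarrow>
     (\<forall>P. (\<forall>u\<in>R. \<forall>i\<in>mindices s m. hasse s d P i u = 0) \<longrightarrow> (\<forall>i\<in>mindices s m. hasse s d P i x = 0))"

lemma recovers_from_lines:
  assumes "0 < s" "card A = m ^ (s - 1)" "\<forall>a\<in>A. d < m * card (T a)"
  shows "recovers s m d (\<Union>a\<in>A. line_pt x (kron_dir s m a) ` T a) x"
  unfolding recovers_def
proof (intro allI impI ballI)
  fix P i
  assume van: "\<forall>u\<in>(\<Union>a\<in>A. line_pt x (kron_dir s m a) ` T a). \<forall>i\<in>mindices s m. hasse s d P i u = 0"
    and i: "i \<in> mindices s m"
  show "hasse s d P i x = 0"
  proof (rule eq_0_if_kron_sums_eq_0[OF assms(1,2) _ i], intro ballI allI)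
    fix a r assume "a \<in> A"
    then show "(\<Sum>i\<in>homog_exps s r. vec_pow s (kron_dir s m a) i * hasse s d P i x) = 0"
      using assms(3) van by (intro line_coeffs_vanish) auto
  qed
qed

lemma mult_codeword_eq_iff:
  "u \<in> points s \<Longrightarrow> mult_codeword s m d P u = mult_codeword s m d P' u
     \<longleftrightarrow> (\<forall>i\<in>mindices s m. hasse s d (\<lambda>e. P e - P' e) i u = 0)"
  by (auto simp: mult_codeword_def mult_symbol_def hasse_diff fun_eq_iff)

lemma ex_fun_of_restrict:
  assumes "\<And>c c'. c \<in> C \<Longrightarrow> c' \<in> C \<Longrightarrow> restrict c R = restrict c' R \<Longrightarrow> c x = c' x"
  shows "\<exists>g. \<forall>c\<in>C. c x = g (restrict c R)"
proof (intro exI ballI)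
  fix c assume "c \<in> C"
  then have "\<exists>c'. c' \<in> C \<and> restrict c' R = restrict c R" by blast
  then have "(SOME c'. c' \<in> C \<and> restrict c' R = restrict c R) \<in> C
      \<and> restrict (SOME c'. c' \<in> C \<and> restrict c' R = restrict c R) R = restrict c R"
    by (rule someI_ex)
  then show "c x = (\<lambda>f. (SOME c'. c' \<in> C \<and> restrict c' R = f) x) (restrict c R)"
    using assms \<open>c \<in> C\<close> by auto
qed

lemma mult_codeword_eq_if_recovers:
  assumes "recovers s m d R x" "R \<subseteq> points s" "x \<in> points s"
    and "\<forall>u\<in>R. mult_codeword s m d P u = mult_codeword s m d P' u"
  shows "mult_codeword s m d P x = mult_codeword s m d P' x"
proof -
  have "\<forall>u\<in>R. \<forall>i\<in>mindices s m. hasse s d (\<lambda>e. P e - P' e) i u = 0"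
  proof
    fix u assume "u \<in> R"
    with assms(2,4) show "\<forall>i\<in>mindices s m. hasse s d (\<lambda>e. P e - P' e) i u = 0"
      using mult_codeword_eq_iff[of u s m d P P'] by blast
  qed
  with assms(1) have "\<forall>i\<in>mindices s m. hasse s d (\<lambda>e. P e - P' e) i x = 0"
    unfolding recovers_def by blast
  with assms(3) show ?thesis
    by (simp add: mult_codeword_eq_iff)
qed

lemma is_batch_code_mult_codeI:
  assumes "\<And>xs :: (nat \<Rightarrow> 'a::field) list. length xs = k \<Longrightarrow> set xs \<subseteq> points s \<Longrightarrow>
    \<exists>R. (\<forall>j<k. R j \<subseteq> points s) \<and> (\<forall>j<k. \<forall>j'<k. j \<noteq> j' \<longrightarrow> R j \<inter> R j' = {})
      \<and> (\<forall>j<k. recovers s m d (R j) (xs ! j))"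
  shows "is_batch_code (mult_code m d s :: ((nat \<Rightarrow> 'a) \<Rightarrow> _) set) (points s) k"
  unfolding is_batch_code_def
proof (intro allI impI)
  let ?C = "mult_code m d s :: ((nat \<Rightarrow> 'a) \<Rightarrow> _) set"
  fix xs :: "(nat \<Rightarrow> 'a) list"
  assume xs: "length xs = k \<and> set xs \<subseteq> points s"
  then have "\<exists>R. (\<forall>j<k. R j \<subseteq> points s) \<and> (\<forall>j<k. \<forall>j'<k. j \<noteq> j' \<longrightarrow> R j \<inter> R j' = {})
      \<and> (\<forall>j<k. recovers s m d (R j) (xs ! j))"
    by (intro assms) auto
  then obtain R where sub: "\<forall>j<k. R j \<subseteq> points s"
    and disj: "\<forall>j<k. \<forall>j'<k. j \<noteq> j' \<longrightarrow> R j \<inter> R j' = {}"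
    and rec: "\<forall>j<k. recovers s m d (R j) (xs ! j)"
    by blast
  have "\<forall>j\<in>{..<k}. \<exists>g. \<forall>c\<in>?C. c (xs ! j) = g (restrict c (R j))"
  proof
    fix j assume "j \<in> {..<k}"
    then have j: "j < k" by simp
    show "\<exists>g. \<forall>c\<in>?C. c (xs ! j) = g (restrict c (R j))"
    proof (rule ex_fun_of_restrict)
      fix c c' assume "c \<in> ?C" "c' \<in> ?C" and eq: "restrict c (R j) = restrict c' (R j)"
      then obtain P P' where "c = mult_codeword s m d P" "c' = mult_codeword s m d P'"
        by (auto simp: mult_code_def)
      moreover have "\<forall>u\<in>R j. c u = c' u"
        using eq by (metis restrict_apply')
      moreover have "xs ! j \<in> points s"
        using xs j by auto
      ultimately show "c (xs ! j) = c' (xs ! j)"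
        using mult_codeword_eq_if_recovers[of s m d "R j" "xs ! j" P P'] rec sub j by auto
    qed
  qed
  from bchoice[OF this] obtain g where "\<forall>j<k. \<forall>c\<in>?C. c (xs ! j) = g j (restrict c (R j))"
    by auto
  with sub disj show "\<exists>R g. (\<forall>j<k. R j \<subseteq> points s) \<and> (\<forall>j<k. \<forall>j'<k. j \<noteq> j' \<longrightarrow> R j \<inter> R j' = {})
      \<and> (\<forall>j<k. \<forall>c\<in>?C. c (xs ! j) = g j (restrict c (R j)))"
    by blast
qed

lemma disjoint_blocks:
  fixes k K :: nat
  assumes "k * K \<le> card (UNIV :: 'a set)"
  obtains A :: "nat \<Rightarrow> 'a::finite set"
  where "\<forall>j<k. card (A j) = K" "\<forall>j<k. \<forall>j'<k. j \<noteq> j' \<longrightarrow> A j \<inter> A j' = {}"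
proof -
  let ?q = "card (UNIV :: 'a set)"
  obtain h :: "nat \<Rightarrow> 'a" where "bij_betw h {0..<?q} UNIV"
    using ex_bij_betw_nat_finite[of "UNIV :: 'a set"] by auto
  then have inj: "inj_on h {0..<?q}" by (simp add: bij_betw_def)
  define A where "A j = h ` {j * K..<Suc j * K}" for j
  have sub: "{j * K..<Suc j * K} \<subseteq> {0..<?q}" if "j < k" for j
    using mult_le_mono1[of "Suc j" k K] that assms by auto
  have "card (A j) = K" if "j < k" for j
    unfolding A_def using inj_on_subset[OF inj sub[OF that]] by (simp add: card_image)
  moreover have "A j \<inter> A j' = {}" if "j < k" "j' < k" "j \<noteq> j'" for j j'
  proof -
    have "x div K = i" if "x \<in> {i * K..<Suc i * K}" for x i
      using that by (intro div_nat_eqI) (auto simp: mult.commute)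
    then have "{j * K..<Suc j * K} \<inter> {j' * K..<Suc j' * K} = {}"
      using \<open>j \<noteq> j'\<close> by blast
    then show ?thesis
      unfolding A_def by (metis inj_on_image_Int[OF inj sub[OF that(1)] sub[OF that(2)]] image_empty)
  qed
  ultimately show ?thesis using that by blast
qed

lemma lines_meet_at_most_once:
  fixes v v' :: "nat \<Rightarrow> 'a::{finite,field}"
  assumes "v 0 = 1" "v' 0 = 1" "v 1 \<noteq> v' 1"
  shows "card {t. line_pt w v t \<in> range (line_pt w' v')} \<le> 1"
proof -
  have "t1 = t2" if "line_pt w v t1 = line_pt w' v' t1'" "line_pt w v t2 = line_pt w' v' t2'"
    for t1 t2 t1' t2'
  proof -
    have "w 0 + t1 = w' 0 + t1'" "w 0 + t2 = w' 0 + t2'"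
      "w 1 + t1 * v 1 = w' 1 + t1' * v' 1" "w 1 + t2 * v 1 = w' 1 + t2' * v' 1"
      using fun_cong[OF that(1), of 0] fun_cong[OF that(2), of 0]
        fun_cong[OF that(1), of 1] fun_cong[OF that(2), of 1] assms(1,2)
      by (simp_all add: line_pt_def)
    then have "(t1 - t2) * (v 1 - v' 1) = 0" by algebra
    then show ?thesis using assms(3) by simp
  qed
  then show ?thesis by (auto simp: card_le_Suc0_iff_eq)
qed

lemma card_params_avoiding_lines:
  fixes f :: "'a::{finite,zero} \<Rightarrow> 'b"
  assumes "finite J" "\<forall>j\<in>J. finite (A j)" "\<forall>j\<in>J. \<forall>a\<in>A j. card {t. f t \<in> range (g j a)} \<le> 1"
  shows "card (UNIV :: 'a set) - (1 + (\<Sum>j\<in>J. card (A j)))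
    \<le> card {t. t \<noteq> 0 \<and> (\<forall>j\<in>J. \<forall>a\<in>A j. f t \<notin> range (g j a))}"
proof -
  let ?B = "insert 0 (\<Union>j\<in>J. \<Union>a\<in>A j. {t. f t \<in> range (g j a)})"
  have "card (\<Union>j\<in>J. \<Union>a\<in>A j. {t. f t \<in> range (g j a)}) \<le> (\<Sum>j\<in>J. \<Sum>a\<in>A j. card {t. f t \<in> range (g j a)})"
    using assms(1,2) by (intro order.trans[OF card_UN_le] sum_mono card_UN_le) auto
  also have "\<dots> \<le> (\<Sum>j\<in>J. \<Sum>a\<in>A j. 1)"
    by (intro sum_mono) (use assms(3) in auto)
  finally have "card ?B \<le> 1 + (\<Sum>j\<in>J. card (A j))"
    by (simp add: card_insert_if)
  moreover have "{t. t \<noteq> 0 \<and> (\<forall>j\<in>J. \<forall>a\<in>A j. f t \<notin> range (g j a))} = UNIV - ?B"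
    by blast
  ultimately show ?thesis
    by (simp add: card_Diff_subset)
qed

lemma card_line_params_avoiding_requests:
  fixes xs :: "(nat \<Rightarrow> 'a::{finite,field}) list"
  assumes "2 \<le> s" "j < length xs" "a \<in> A j" "\<forall>j<length xs. card (A j) = K"
    and "\<forall>j<length xs. \<forall>j'<length xs. j \<noteq> j' \<longrightarrow> A j \<inter> A j' = {}"
  shows "card (UNIV :: 'a set) - (1 + (length xs - 1) * K)
    \<le> card {t. t \<noteq> 0 \<and> (\<forall>j'\<in>{..<length xs} - {j}. \<forall>a'\<in>A j'.
         line_pt (xs ! j) (kron_dir s m a) t \<notin> range (line_pt (xs ! j') (kron_dir s m a')))}"
proof -
  have "\<forall>j'\<in>{..<length xs} - {j}. \<forall>a'\<in>A j'.
      card {t. line_pt (xs ! j) (kron_dir s m a) t \<in> range (line_pt (xs ! j') (kron_dir s m a'))} \<le> 1"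
    using assms(1-3,5) by (intro ballI lines_meet_at_most_once) (auto simp: kron_dir_def)
  then have "card (UNIV :: 'a set) - (1 + (\<Sum>j'\<in>{..<length xs} - {j}. card (A j')))
      \<le> card {t. t \<noteq> 0 \<and> (\<forall>j'\<in>{..<length xs} - {j}. \<forall>a'\<in>A j'.
         line_pt (xs ! j) (kron_dir s m a) t \<notin> range (line_pt (xs ! j') (kron_dir s m a')))}"
    by (intro card_params_avoiding_lines) auto
  moreover have "(\<Sum>j'\<in>{..<length xs} - {j}. card (A j')) = (length xs - 1) * K"
    using assms(2,4) by simp
  ultimately show ?thesis by simp
qed

lemma batch_recovery_sets:
  fixes xs :: "(nat \<Rightarrow> 'a::{finite,field}) list"
  assumes "2 \<le> s" "set xs \<subseteq> points s"
    and "length xs * m ^ (s - 1) \<le> card (UNIV :: 'a set)"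
    and "d < m * (card (UNIV :: 'a set) - (1 + (length xs - 1) * m ^ (s - 1)))"
  shows "\<exists>R. (\<forall>j<length xs. R j \<subseteq> points s)
    \<and> (\<forall>j<length xs. \<forall>j'<length xs. j \<noteq> j' \<longrightarrow> R j \<inter> R j' = {})
    \<and> (\<forall>j<length xs. recovers s m d (R j) (xs ! j))"
proof -
  let ?k = "length xs" and ?K = "m ^ (s - 1)"
  obtain A :: "nat \<Rightarrow> 'a set" where card_A: "\<forall>j<?k. card (A j) = ?K"
    and disj_A: "\<forall>j<?k. \<forall>j'<?k. j \<noteq> j' \<longrightarrow> A j \<inter> A j' = {}"
    using disjoint_blocks[OF assms(3)] by blast
  define line where "line j a = line_pt (xs ! j) (kron_dir s m a)" for j a
  define T where "T j a = {t. t \<noteq> 0 \<and> (\<forall>j'\<in>{..<?k} - {j}. \<forall>a'\<in>A j'. line j a t \<notin> range (line j' a'))}"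
    for j a
  define R where "R j = (\<Union>a\<in>A j. line j a ` T j a)" for j
  have "R j \<subseteq> points s" if "j < ?k" for j
    using assms(1,2) nth_mem[OF that]
    by (auto simp: R_def line_def line_pt_def kron_dir_def points_def subset_iff)
  moreover have "R j \<inter> R j' = {}" if "j < ?k" "j' < ?k" "j \<noteq> j'" for j j'
  proof (intro equalityI subsetI)
    fix u assume "u \<in> R j \<inter> R j'"
    then obtain a t a' where "t \<in> T j a" "u = line j a t" "a' \<in> A j'" "u \<in> range (line j' a')"
      by (auto simp: R_def)
    then show "u \<in> {}"
      using that by (auto simp: T_def)
  qed simp
  moreover have "recovers s m d (R j) (xs ! j)" if "j < ?k" for j
    unfolding R_def line_def
  proof (rule recovers_from_lines)
    show "0 < s" "card (A j) = ?K" using assms(1) card_A that by auto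
    show "\<forall>a\<in>A j. d < m * card (T j a)"
    proof
      fix a assume "a \<in> A j"
      then have "card (UNIV :: 'a set) - (1 + (?k - 1) * ?K) \<le> card (T j a)"
        unfolding T_def line_def
        by (rule card_line_params_avoiding_requests[OF assms(1) that _ card_A disj_A])
      then have "m * (card (UNIV :: 'a set) - (1 + (?k - 1) * ?K)) \<le> m * card (T j a)"
        by (rule mult_le_mono2)
      with assms(4) show "d < m * card (T j a)"
        by (rule less_le_trans)
    qed
  qed
  ultimately show ?thesis by blast
qed

lemma batch_parameter_bounds:
  fixes d m k K q :: nat
  assumes "0 < d" "int d \<le> int m * (int q - int k * int K - 2)"
  shows "k * K \<le> q" "d < m * (q - (1 + (k - 1) * K))"
proof -
  have d: "int d \<le> int m * (int q - int (k * K) - 2)"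
    using assms(2) by simp
  then have "0 < int m * (int q - int (k * K) - 2)"
    using assms(1) by linarith
  then have "0 < m" and slack: "int (k * K) + 2 < int q"
    by (auto simp: zero_less_mult_iff)
  then show "k * K \<le> q" by linarith
  have "int ((k - 1) * K) \<le> int (k * K)"
    by (simp only: of_nat_le_iff) simp
  then have "int q - int (k * K) - 2 < int (q - (1 + (k - 1) * K))"
    using slack by (subst of_nat_diff) linarith+
  then have "int m * (int q - int (k * K) - 2) < int m * int (q - (1 + (k - 1) * K))"
    using \<open>0 < m\<close> by (intro mult_strict_left_mono) auto
  with d have "int d < int m * int (q - (1 + (k - 1) * K))"
    by (rule le_less_trans)
  then show "d < m * (q - (1 + (k - 1) * K))"
    by (simp only: of_nat_mult[symmetric] of_nat_less_iff)
qed

lemma card_points: "card (points s :: (nat \<Rightarrow> 'a::{finite,field}) set) = card (UNIV :: 'a set) ^ s"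
proof -
  have "points s = {f :: nat \<Rightarrow> 'a. \<forall>x. x \<notin> {..<s} \<longrightarrow> f x = 0}"
    by (auto simp: points_def not_less)
  then show ?thesis
    using card_funs_vanishing_outside[of "{..<s}", where 'b='a] by simp
qed

lemma card_alphabet:
  assumes "0 < m"
  shows "card (alphabet s m :: ((nat \<Rightarrow> nat) \<Rightarrow> 'a::{finite,field}) set)
    = card (UNIV :: 'a set) ^ ((s + m - 1) choose s)"
proof -
  have "alphabet s m = {\<sigma> :: (nat \<Rightarrow> nat) \<Rightarrow> 'a. \<forall>i. i \<notin> mindices s m \<longrightarrow> \<sigma> i = 0}"
    by (simp add: alphabet_def)
  then show ?thesis
    using assms card_mindices[OF assms, of s]
    by (simp add: card_funs_vanishing_outside mindices_eq_monoms finite_monoms)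
qed

lemma mult_code_subset_funcset: "mult_code m d s \<subseteq> (points s :: (nat \<Rightarrow> 'a::field) set) \<rightarrow> alphabet s m"
  by (auto simp: mult_code_def mult_codeword_def mult_symbol_def alphabet_def)

lemma inj_on_mult_codeword:
  assumes "d < m * card (UNIV :: 'a set)"
  shows "inj_on (mult_codeword s m d :: _ \<Rightarrow> (nat \<Rightarrow> 'a::{finite,field}) \<Rightarrow> _) (polys s d)"
proof (rule inj_onI)
  fix P P' :: "(nat \<Rightarrow> nat) \<Rightarrow> 'a"
  assume P: "P \<in> polys s d" "P' \<in> polys s d"
    and eq: "mult_codeword s m d P = (mult_codeword s m d P' :: (nat \<Rightarrow> 'a) \<Rightarrow> _)"
  have "\<forall>w\<in>points s. \<forall>i\<in>mindices s m. hasse s d (\<lambda>e. P e - P' e) i (w :: nat \<Rightarrow> 'a) = 0"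
    using eq by (simp add: mult_codeword_eq_iff[symmetric])
  then have "(\<lambda>e. P e - P' e) = (\<lambda>_. 0)"
    by (rule polys_eq_0_if_vanishing_multiplicity[OF polys_diff[OF P] assms])
  then show "P = P'" by (simp add: fun_eq_iff)
qed

lemma card_mult_code:
  assumes "d < m * card (UNIV :: 'a set)"
  shows "card (mult_code m d s :: ((nat \<Rightarrow> 'a::{finite,field}) \<Rightarrow> _) set)
    = card (UNIV :: 'a set) ^ ((d + s) choose s)"
proof -
  have "polys s d = {P :: (nat \<Rightarrow> nat) \<Rightarrow> 'a. \<forall>e. e \<notin> monoms s d \<longrightarrow> P e = 0}"
    by (auto simp: polys_def)
  then have "card (polys s d :: ((nat \<Rightarrow> nat) \<Rightarrow> 'a) set) = card (UNIV :: 'a set) ^ ((d + s) choose s)"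
    by (simp add: card_funs_vanishing_outside finite_monoms card_monoms)
  then show ?thesis
    unfolding mult_code_def using card_image[OF inj_on_mult_codeword[OF assms]] by simp
qed

lemma of_nat_power_powr_divide:
  assumes "0 < x" "0 < b"
  shows "real (x ^ b) powr (real n / real b) = real (x ^ n)"
proof -
  have "real (x ^ b) powr (real n / real b) = (real x powr real b) powr (real n / real b)"
    using assms(1) by (simp add: powr_realpow)
  also have "\<dots> = real x powr real n"
    using assms(2) by (simp add: powr_powr)
  also have "\<dots> = real (x ^ n)"
    using assms(1) by (simp add: powr_realpow)
  finally show ?thesis .
qed

lemma is_batch_code_mult_code:
  assumes "0 < s" "k \<le> (card (UNIV :: 'a set) div m) ^ (s - 1)"
    and "k * m ^ (s - 1) \<le> card (UNIV :: 'a set)"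
    and "d < m * (card (UNIV :: 'a set) - (1 + (k - 1) * m ^ (s - 1)))"
  shows "is_batch_code (mult_code m d s :: ((nat \<Rightarrow> 'a::{finite,field}) \<Rightarrow> _) set) (points s) k"
proof (rule is_batch_code_mult_codeI)
  fix xs :: "(nat \<Rightarrow> 'a) list"
  assume xs: "length xs = k" "set xs \<subseteq> points s"
  show "\<exists>R. (\<forall>j<k. R j \<subseteq> points s) \<and> (\<forall>j<k. \<forall>j'<k. j \<noteq> j' \<longrightarrow> R j \<inter> R j' = {})
      \<and> (\<forall>j<k. recovers s m d (R j) (xs ! j))"
  proof (cases "s = 1")
    case True
    \<comment> \<open>The only use of \<open>k \<le> (q div m)^(s-1)\<close>: it forces \<open>k \<le> 1\<close>.\<close>
    with assms(2) xs show ?thesis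
      by (intro exI[of _ "\<lambda>j. {xs ! j}"]) (auto simp: recovers_def)
  next
    case False
    with assms(1,3,4) xs show ?thesis
      using batch_recovery_sets[of s xs m d] by simp
  qed
qed

theorem lemma4:
  fixes m s d k :: nat
    and field_witness :: "'a::{finite,field} itself"
  assumes "m > 0" and "s > 0" and "d > 0" and "k > 0"
    and "int d \<le> int m * (int (card (UNIV :: 'a set)) - int k * int m ^ (s - 1) - 2)"
    and "k \<le> (card (UNIV :: 'a set) div m) ^ (s - 1)"
  shows "card (points s :: (nat \<Rightarrow> 'a) set) = card (UNIV :: 'a set) ^ s
    \<and> card (alphabet s m :: ((nat \<Rightarrow> nat) \<Rightarrow> 'a) set) = card (UNIV :: 'a set) ^ ((s + m - 1) choose s)
    \<and> mult_code m d s \<subseteq> (points s :: (nat \<Rightarrow> 'a) set) \<rightarrow> alphabet s m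
    \<and> real (card (mult_code m d s :: ((nat \<Rightarrow> 'a) \<Rightarrow> ((nat \<Rightarrow> nat) \<Rightarrow> 'a)) set))
        = real (card (UNIV :: 'a set) ^ ((s + m - 1) choose s))
            powr (real ((d + s) choose s) / real ((s + m - 1) choose s))
    \<and> is_batch_code (mult_code m d s :: ((nat \<Rightarrow> 'a) \<Rightarrow> ((nat \<Rightarrow> nat) \<Rightarrow> 'a)) set)
        (points s) k"
proof -
  let ?q = "card (UNIV :: 'a set)"
  have kK: "k * m ^ (s - 1) \<le> ?q" and d_bound: "d < m * (?q - (1 + (k - 1) * m ^ (s - 1)))"
    using batch_parameter_bounds[of d m ?q k "m ^ (s - 1)"] assms(3,5) by (simp_all add: of_nat_power)
  have "m * (?q - (1 + (k - 1) * m ^ (s - 1))) \<le> m * ?q"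
    by (intro mult_le_mono2) simp
  with d_bound have "d < m * ?q"
    by (rule less_le_trans)
  have "real (?q ^ ((s + m - 1) choose s)) powr (real ((d + s) choose s) / real ((s + m - 1) choose s))
      = real (?q ^ ((d + s) choose s))"
    using assms(1) by (intro of_nat_power_powr_divide) (simp_all add: card_gt_0_iff zero_less_binomial_iff)
  with assms(1) \<open>d < m * ?q\<close> is_batch_code_mult_code[OF assms(2,6) kK d_bound] show ?thesis
    by (simp only: card_points card_alphabet mult_code_subset_funcset card_mult_code simp_thms)
qed

end
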